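(* Let $\mathcal{A}$ be a quantum query algorithm with a $q$-bit classical witness deciding spectral Forrelation (as described in the context) that makes $t$ queries to $S$ and $t$ queries to $U$. Let $(S,U)$ be at least $\frac{59}{100}$-spectrally Forrelated, let $\Delta$ be a subset of the set of elements of $S$ such that $(\Delta,U)$ is at most $\frac{57}{100}$-spectrally Forrelated, and let $w$ be a witness such that $\mathcal{A}^{(S,U)}(w)$ accepts with probability at least $2/3$. Then $\mathsf{Sampler}^U(w,\Delta)$ makes $t$ queries to $U$, no queries to $S$, and outputs an element of $S\setminus\Delta$ with probability at least $\frac{1}{36t^2}$.
   Context: For sets $S,U\subseteq\{0,1\}^n$ (multisets are treated as their underlying sets), with $\Pi_S=\sum_{x\in S}|x\rangle\langle x|$, $(S,U)$ is $\alpha$-spectrally Forrelated for $\alpha=\|\Pi_UH^{\otimes n}\Pi_S\|_{\mathrm{op}}^2$. The algorithm $\mathcal{A}$ satisfies: if $(S,U)$ is at least $\frac{59}{100}$-spectrally Forrelated, some $w\in\{0,1\}^q$ makes $\mathcal{A}^{(S,U)}(w)$ accept with probability $\ge2/3$; if at most $\frac{57}{100}$-spectrally Forrelated, every $w$ is accepted with probability $\le1/3$. Oracles are phase oracles, e.g. $\mathcal{O}_S|b,x\rangle|z\rangle=(-1)^{b\cdot\delta(x\in S)}|b,x\rangle|z\rangle$. Write the state of $\mathcal{A}^{(S,U)}(w)$ before its final measurement of the first qubit as $V_t\mathcal{O}_SV_{t-1}\mathcal{O}_S\cdots\mathcal{O}_SV_0|w,0\rangle$, where the unitaries $V_j$ include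 the queries to $U$. $\mathsf{Sampler}^U(w,\Delta)$: sample $j\in\{0,\dots,t-1\}$ uniformly; prepare $V_j\mathcal{O}_\Delta V_{j-1}\mathcal{O}_\Delta\cdots\mathcal{O}_\Delta V_0|w,0\rangle$ where $\mathcal{O}_\Delta|b,x\rangle|z\rangle=(-1)^{b\cdot\delta(x\in\Delta)}|b,x\rangle|z\rangle$; measure in the standard basis obtaining $(b,x,z)$; if $x\in\Delta$ output the lexicographically first string not in $\Delta$, else output $x$. *)

theory Defs
  imports Complex_Main "HOL-Library.List_Lexorder"
begin

text \<open>n-bit strings are boolean lists of length n (True = 1).
 Basis states of the algorithm: (b, x, z) with b the first qubit, x an n-bit
 register and z an m-bit workspace register.\<close>

definition strings :: "nat \<Rightarrow> bool list set" where
  "strings n = {x. length x = n}"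

type_synonym basis = "bool \<times> bool list \<times> bool list"
type_synonym state = "basis \<Rightarrow> complex"

definition carrier :: "nat \<Rightarrow> nat \<Rightarrow> basis set" where
  "carrier n m = {(b, x, z). length x = n \<and> length z = m}"

definition vnorm :: "nat \<Rightarrow> (bool list \<Rightarrow> complex) \<Rightarrow> real" where
  "vnorm n v = sqrt (\<Sum>x\<in>strings n. (cmod (v x))\<^sup>2)"

definition proj :: "bool list set \<Rightarrow> (bool list \<Rightarrow> complex) \<Rightarrow> (bool list \<Rightarrow> complex)" where
  "proj T v = (\<lambda>x. if x \<in> T then v x else 0)"

definition ip :: "bool list \<Rightarrow> bool list \<Rightarrow> nat" where
  "ip x y = length (filter (\<lambda>p. fst p \<and> snd p) (zip x y))"

definition hadamard :: "nat \<Rightarrow> (bool list \<Rightarrow> complex) \<Rightarrow> (bool list \<Rightarrow> complex)" where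
  "hadamard n v = (\<lambda>y. if length y = n
      then (\<Sum>x\<in>strings n. (-1) ^ ip x y * v x) / complex_of_real (sqrt (2 ^ n))
      else 0)"

definition spec_forr :: "nat \<Rightarrow> bool list set \<Rightarrow> bool list set \<Rightarrow> real" where
  "spec_forr n S U =
     (SUP v \<in> {v. vnorm n v \<le> 1}. vnorm n (proj U (hadamard n (proj S v)))) ^ 2"

text \<open>A gate is either a fixed (oracle-independent) matrix on the basis, a phase
 query to S, or a phase query to U.\<close>
datatype gate = Gate "basis \<Rightarrow> basis \<Rightarrow> complex" | QueryS | QueryU

definition unitary_on :: "nat \<Rightarrow> nat \<Rightarrow> (basis \<Rightarrow> basis \<Rightarrow> complex) \<Rightarrow> bool" where
  "unitary_on n m M \<longleftrightarrow>
     (\<forall>i\<in>carrier n m. \<forall>j\<in>carrier n m.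
        (\<Sum>k\<in>carrier n m. cnj (M k i) * M k j) = (if i = j then 1 else 0))"

fun wf_gate :: "nat \<Rightarrow> nat \<Rightarrow> gate \<Rightarrow> bool" where
  "wf_gate n m (Gate M) = unitary_on n m M"
| "wf_gate n m QueryS = True"
| "wf_gate n m QueryU = True"

definition mat_apply :: "nat \<Rightarrow> nat \<Rightarrow> (basis \<Rightarrow> basis \<Rightarrow> complex) \<Rightarrow> state \<Rightarrow> state" where
  "mat_apply n m M \<psi> = (\<lambda>i. if i \<in> carrier n m then (\<Sum>j\<in>carrier n m. M i j * \<psi> j) else 0)"

definition phase :: "bool list set \<Rightarrow> state \<Rightarrow> state" where
  "phase T \<psi> = (\<lambda>(b, x, z). (if b \<and> x \<in> T then -1 else 1) * \<psi> (b, x, z))"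

text \<open>O_T as an explicit (oracle-free) gate, for a classically known set T.\<close>
definition phase_gate :: "bool list set \<Rightarrow> gate" where
  "phase_gate T = Gate (\<lambda>i j. if i = j then (if fst i \<and> fst (snd i) \<in> T then -1 else 1) else 0)"

fun apply_gate :: "nat \<Rightarrow> nat \<Rightarrow> bool list set \<Rightarrow> bool list set \<Rightarrow> gate \<Rightarrow> state \<Rightarrow> state" where
  "apply_gate n m S U (Gate M) \<psi> = mat_apply n m M \<psi>"
| "apply_gate n m S U QueryS \<psi> = phase S \<psi>"
| "apply_gate n m S U QueryU \<psi> = phase U \<psi>"

text \<open>Gates are applied left to right (head of list first).\<close>
fun run :: "nat \<Rightarrow> nat \<Rightarrow> bool list set \<Rightarrow> bool list set \<Rightarrow> gate list \<Rightarrow> state \<Rightarrow> state" where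
  "run n m S U [] \<psi> = \<psi>"
| "run n m S U (g # gs) \<psi> = run n m S U gs (apply_gate n m S U g \<psi>)"

definition num_S :: "gate list \<Rightarrow> nat" where
  "num_S gs = length (filter (\<lambda>g. g = QueryS) gs)"

definition num_U :: "gate list \<Rightarrow> nat" where
  "num_U gs = length (filter (\<lambda>g. g = QueryU) gs)"

definition init :: "nat \<Rightarrow> nat \<Rightarrow> bool list \<Rightarrow> state" where
  "init n m w = (\<lambda>i. if i = (False, replicate n False, w @ replicate (m - length w) False)
                     then 1 else 0)"

text \<open>Probability that measuring the first qubit of the final state gives 1 (accept).\<close>
definition acc_prob :: "nat \<Rightarrow> nat \<Rightarrow> bool list set \<Rightarrow> bool list set \<Rightarrow> gate list \<Rightarrow> bool list \<Rightarrow> real" where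
  "acc_prob n m S U gs w =
     (\<Sum>i\<in>carrier n m. if fst i then (cmod (run n m S U gs (init n m w) i))\<^sup>2 else 0)"

definition decides_spec_forr :: "nat \<Rightarrow> nat \<Rightarrow> nat \<Rightarrow> gate list \<Rightarrow> bool" where
  "decides_spec_forr n m q gs \<longleftrightarrow>
     (\<forall>S U. S \<subseteq> strings n \<longrightarrow> U \<subseteq> strings n \<longrightarrow>
        (spec_forr n S U \<ge> 59/100 \<longrightarrow>
           (\<exists>w. length w = q \<and> acc_prob n m S U gs w \<ge> 2/3)) \<and>
        (spec_forr n S U \<le> 57/100 \<longrightarrow>
           (\<forall>w. length w = q \<longrightarrow> acc_prob n m S U gs w \<le> 1/3)))"

text \<open>prefix_before j gs = V_0 O V_1 ... O V_j : all gates before the (j+1)-th S-query.\<close>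
fun prefix_before :: "nat \<Rightarrow> gate list \<Rightarrow> gate list" where
  "prefix_before k [] = []"
| "prefix_before k (g # gs) =
     (if g = QueryS then (if k = 0 then [] else g # prefix_before (k - 1) gs)
      else g # prefix_before k gs)"

definition sampler_gates :: "bool list set \<Rightarrow> nat \<Rightarrow> gate list \<Rightarrow> gate list" where
  "sampler_gates \<Delta> j gs =
     map (\<lambda>g. if g = QueryS then phase_gate \<Delta> else g) (prefix_before j gs)"

definition sampler_out :: "nat \<Rightarrow> bool list set \<Rightarrow> basis \<Rightarrow> bool list" where
  "sampler_out n \<Delta> i = (let x = fst (snd i) in
      if x \<in> \<Delta> then Min {y \<in> strings n. y \<notin> \<Delta>} else x)"

text \<open>Probability that Sampler^U(w,Delta) outputs an element of T
  (j uniform in {0..t-1}, then standard-basis measurement of all registers).\<close>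
definition sampler_prob :: "nat \<Rightarrow> nat \<Rightarrow> bool list set \<Rightarrow> bool list set \<Rightarrow> bool list set
      \<Rightarrow> gate list \<Rightarrow> nat \<Rightarrow> bool list \<Rightarrow> bool list set \<Rightarrow> real" where
  "sampler_prob n m S U \<Delta> gs t w T =
     (\<Sum>j<t. (1 / real t) *
        (\<Sum>i\<in>carrier n m.
           if sampler_out n \<Delta> i \<in> T
           then (cmod (run n m S U (sampler_gates \<Delta> j gs) (init n m w) i))\<^sup>2 else 0))"

end

theory Submission
  imports Defs "HOL-Analysis.L2_Norm" "HOL-Analysis.Convex" "HOL-Library.Function_Algebras"
begin

text \<open>Hybrid argument.  Run the algorithm on the witness w once with the oracle O_S and once
  with O_\<Delta>.  The first run accepts with probability at least 2/3, the second with probability at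
  most 1/3, so the two final unit states are at distance at least 1/3.  Swapping the j-th query
  from O_\<Delta> to O_S moves the state by 2 p_j, where p_j is the norm of the part of the
  O_\<Delta>-run before its j-th query that has b = 1 and x \<in> S - \<Delta>; hence \<Sum>_j p_j \<ge> 1/6 and, by
  Cauchy-Schwarz, \<Sum>_j p_j^2 \<ge> 1/(36 t).  The sampler, stopped just before query j, observes such
  an x with probability at least p_j^2, so averaging over j gives 1/(36 t^2).\<close>

lemma finite_carrier: "finite (carrier n m)"
proof -
  have "carrier n m = UNIV \<times> {x. set x \<subseteq> UNIV \<and> length x = n} \<times> {z. set z \<subseteq> UNIV \<and> length z = m}"
    by (auto simp: carrier_def)
  then show ?thesis
    using finite_lists_length_eq[of "UNIV :: bool set"] by simp
qed

lemma power2_L2_set: "(L2_set f A)\<^sup>2 = (\<Sum>i\<in>A. (f i)\<^sup>2)"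
  unfolding L2_set_def by (simp add: sum_nonneg)

lemma power2_L2_set_split:
  assumes "finite I" "A \<subseteq> I"
  shows "(L2_set f I)\<^sup>2 = (L2_set f A)\<^sup>2 + (L2_set f (I - A))\<^sup>2"
  by (simp add: power2_L2_set sum.subset_diff[OF assms(2,1)] add.commute)

lemma L2_set_norm_le_diff:
  "L2_set (\<lambda>i. norm (\<psi> i)) A \<le> L2_set (\<lambda>i. norm (\<psi> i - \<phi> i)) A + L2_set (\<lambda>i. norm (\<phi> i)) A"
proof -
  have "L2_set (\<lambda>i. norm (\<psi> i)) A \<le> L2_set (\<lambda>i. norm (\<psi> i - \<phi> i) + norm (\<phi> i)) A"
  proof (rule L2_set_mono)
    show "norm (\<psi> i) \<le> norm (\<psi> i - \<phi> i) + norm (\<phi> i)" for i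
      using norm_triangle_ineq[of "\<psi> i - \<phi> i" "\<phi> i"] by simp
  qed simp
  also have "\<dots> \<le> L2_set (\<lambda>i. norm (\<psi> i - \<phi> i)) A + L2_set (\<lambda>i. norm (\<phi> i)) A"
    by (rule L2_set_triangle_ineq)
  finally show ?thesis .
qed

lemma sq_diff_sq_le_dist_sq:
  fixes a a' b b' :: real
  assumes "0 \<le> a" "0 \<le> a'" "0 \<le> b" "0 \<le> b'" "a\<^sup>2 + a'\<^sup>2 = 1" "b\<^sup>2 + b'\<^sup>2 = 1"
  shows "(a\<^sup>2 - b\<^sup>2)\<^sup>2 \<le> (a - b)\<^sup>2 + (a' - b')\<^sup>2"
proof -
  define X where "X = (a - b) * (b' - a')"
  define Y where "Y = (a + b) * (a' + b')"
  have "a\<^sup>2 - b\<^sup>2 = b'\<^sup>2 - a'\<^sup>2"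
    using assms(5,6) by linarith
  then have "(a\<^sup>2 - b\<^sup>2)\<^sup>2 = (a\<^sup>2 - b\<^sup>2) * (b'\<^sup>2 - a'\<^sup>2)"
    by (simp add: power2_eq_square)
  also have "\<dots> = X * Y"
    unfolding X_def Y_def by (simp add: power2_eq_square algebra_simps)
  finally have factor: "(a\<^sup>2 - b\<^sup>2)\<^sup>2 = X * Y" .
  have am_gm: "2 * X \<le> (a - b)\<^sup>2 + (a' - b')\<^sup>2"
    using zero_le_power2[of "(a - b) - (b' - a')"] unfolding X_def
    by (simp add: power2_eq_square algebra_simps)
  have "Y \<le> 2"
    using assms zero_le_power2[of "a - b"] zero_le_power2[of "a' - b'"]
      zero_le_power2[of "(a + b) - (a' + b')"]
    unfolding Y_def by (simp add: power2_eq_square algebra_simps)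
  moreover have "0 \<le> Y"
    using assms(1-4) unfolding Y_def by simp
  ultimately have "X * Y \<le> (a - b)\<^sup>2 + (a' - b')\<^sup>2"
    using am_gm by (cases "0 \<le> X")
      (auto intro: order.trans[OF mult_left_mono] order.trans[OF mult_nonpos_nonneg])
  then show ?thesis
    using factor by simp
qed

text \<open>The constant 1 here, rather than the 2 that |a^2 - b^2| \<le> 2|a - b| would give, is what
  the bound 1/(36 t^2) needs.\<close>

lemma measurement_prob_diff_le_dist:
  fixes \<psi> \<phi> :: "'a \<Rightarrow> 'b::real_normed_vector"
  assumes "finite I" "A \<subseteq> I"
    and "L2_set (\<lambda>i. norm (\<psi> i)) I = 1" "L2_set (\<lambda>i. norm (\<phi> i)) I = 1"
  shows "(\<Sum>i\<in>A. (norm (\<psi> i))\<^sup>2) - (\<Sum>i\<in>A. (norm (\<phi> i))\<^sup>2) \<le> L2_set (\<lambda>i. norm (\<psi> i - \<phi> i)) I"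
proof -
  have close: "(L2_set (\<lambda>i. norm (\<psi> i)) B - L2_set (\<lambda>i. norm (\<phi> i)) B)\<^sup>2
      \<le> (L2_set (\<lambda>i. norm (\<psi> i - \<phi> i)) B)\<^sup>2" for B
    using L2_set_norm_le_diff[where \<psi> = \<psi> and \<phi> = \<phi> and A = B]
      L2_set_norm_le_diff[where \<psi> = \<phi> and \<phi> = \<psi> and A = B]
    by (simp add: abs_le_square_iff[symmetric] abs_le_iff norm_minus_commute)
  define a where "a = L2_set (\<lambda>i. norm (\<psi> i)) A"
  define a' where "a' = L2_set (\<lambda>i. norm (\<psi> i)) (I - A)"
  define b where "b = L2_set (\<lambda>i. norm (\<phi> i)) A"
  define b' where "b' = L2_set (\<lambda>i. norm (\<phi> i)) (I - A)"
  define d where "d = L2_set (\<lambda>i. norm (\<psi> i - \<phi> i)) I"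
  have "a\<^sup>2 + a'\<^sup>2 = 1" "b\<^sup>2 + b'\<^sup>2 = 1"
    using assms(3,4) power2_L2_set_split[OF assms(1,2), of "\<lambda>i. norm (\<psi> i)"]
      power2_L2_set_split[OF assms(1,2), of "\<lambda>i. norm (\<phi> i)"]
    unfolding a_def a'_def b_def b'_def by simp_all
  then have "(a\<^sup>2 - b\<^sup>2)\<^sup>2 \<le> (a - b)\<^sup>2 + (a' - b')\<^sup>2"
    by (intro sq_diff_sq_le_dist_sq) (simp_all add: a_def a'_def b_def b'_def)
  also have "\<dots> \<le> d\<^sup>2"
    using add_mono[OF close[of A] close[of "I - A"]]
      power2_L2_set_split[OF assms(1,2), of "\<lambda>i. norm (\<psi> i - \<phi> i)"]
    unfolding a_def a'_def b_def b'_def d_def by simp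
  finally have "\<bar>a\<^sup>2 - b\<^sup>2\<bar> \<le> d"
    by (simp add: abs_le_square_iff[symmetric] d_def)
  then show ?thesis
    by (simp add: a_def b_def d_def power2_L2_set)
qed

definition state_norm :: "nat \<Rightarrow> nat \<Rightarrow> state \<Rightarrow> real" where
  "state_norm n m \<psi> = L2_set (\<lambda>i. cmod (\<psi> i)) (carrier n m)"

lemma state_norm_triangle: "state_norm n m (\<psi> + \<phi>) \<le> state_norm n m \<psi> + state_norm n m \<phi>"
proof -
  have "state_norm n m (\<psi> + \<phi>) \<le> L2_set (\<lambda>i. cmod (\<psi> i) + cmod (\<phi> i)) (carrier n m)"
    unfolding state_norm_def by (rule L2_set_mono) (auto simp: norm_triangle_ineq)
  also have "\<dots> \<le> state_norm n m \<psi> + state_norm n m \<phi>"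
    unfolding state_norm_def by (rule L2_set_triangle_ineq)
  finally show ?thesis .
qed

lemma state_norm_init:
  assumes "length w \<le> m"
  shows "state_norm n m (init n m w) = 1"
proof -
  let ?p = "(False, replicate n False, w @ replicate (m - length w) False)"
  have "?p \<in> carrier n m"
    using assms by (simp add: carrier_def)
  moreover have "(cmod (init n m w i))\<^sup>2 = (if i = ?p then 1 else 0)" for i
    by (simp add: init_def)
  ultimately have "(\<Sum>i\<in>carrier n m. (cmod (init n m w i))\<^sup>2) = 1"
    using finite_carrier by simp
  then show ?thesis
    by (simp add: state_norm_def L2_set_def)
qed

lemma state_norm_mat_apply:
  assumes "unitary_on n m M"
  shows "state_norm n m (mat_apply n m M \<psi>) = state_norm n m \<psi>"
proof -
  let ?C = "carrier n m"
  have "complex_of_real (\<Sum>k\<in>?C. (cmod (mat_apply n m M \<psi> k))\<^sup>2)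
      = (\<Sum>k\<in>?C. (\<Sum>j\<in>?C. M k j * \<psi> j) * cnj (\<Sum>j'\<in>?C. M k j' * \<psi> j'))"
    unfolding of_real_sum
    by (intro sum.cong refl) (subst complex_norm_square, simp add: mat_apply_def)
  also have "\<dots> = (\<Sum>k\<in>?C. \<Sum>j'\<in>?C. \<Sum>j\<in>?C. \<psi> j * cnj (\<psi> j') * (cnj (M k j') * M k j))"
    by (simp add: sum_distrib_left sum_distrib_right algebra_simps)
  also have "\<dots> = (\<Sum>j'\<in>?C. \<Sum>j\<in>?C. \<Sum>k\<in>?C. \<psi> j * cnj (\<psi> j') * (cnj (M k j') * M k j))"
    by (subst sum.swap) (intro sum.cong refl sum.swap)
  also have "\<dots> = (\<Sum>j'\<in>?C. \<Sum>j\<in>?C. \<psi> j * cnj (\<psi> j') * (if j' = j then 1 else 0))"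
    using assms by (simp add: unitary_on_def flip: sum_distrib_left)
  also have "\<dots> = (\<Sum>j\<in>?C. \<psi> j * cnj (\<psi> j))"
    by (simp add: finite_carrier if_distrib cong: if_cong)
  also have "\<dots> = complex_of_real (\<Sum>j\<in>?C. (cmod (\<psi> j))\<^sup>2)"
    unfolding of_real_sum by (intro sum.cong refl) (subst complex_norm_square, simp)
  finally show ?thesis
    unfolding state_norm_def L2_set_def of_real_eq_iff by simp
qed

lemma state_norm_phase: "state_norm n m (phase T \<psi>) = state_norm n m \<psi>"
  unfolding state_norm_def by (intro L2_set_cong) (auto simp: phase_def norm_mult)

lemma state_norm_apply_gate:
  "wf_gate n m g \<Longrightarrow> state_norm n m (apply_gate n m S U g \<psi>) = state_norm n m \<psi>"
  by (cases g) (simp_all add: state_norm_mat_apply state_norm_phase)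

lemma state_norm_run:
  "\<forall>g\<in>set gs. wf_gate n m g \<Longrightarrow> state_norm n m (run n m S U gs \<psi>) = state_norm n m \<psi>"
  by (induction gs arbitrary: \<psi>) (simp_all add: state_norm_apply_gate)

lemma apply_gate_diff:
  "apply_gate n m S U g (\<psi> - \<phi>) = apply_gate n m S U g \<psi> - apply_gate n m S U g \<phi>"
  by (cases g) (auto simp: mat_apply_def phase_def algebra_simps fun_eq_iff sum_subtractf)

definition query_part :: "bool list set \<Rightarrow> state \<Rightarrow> state" where
  "query_part T \<chi> = (\<lambda>(b, x, z). if b \<and> x \<in> T then \<chi> (b, x, z) else 0)"

lemma state_norm_phase_diff:
  assumes "D \<subseteq> S"
  shows "state_norm n m (phase S \<phi> - phase D \<phi>) = 2 * state_norm n m (query_part (S - D) \<phi>)"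
proof -
  have "cmod ((phase S \<phi> - phase D \<phi>) i) = 2 * cmod (query_part (S - D) \<phi> i)" for i
    using assms by (auto simp: phase_def query_part_def split: prod.split)
  then show ?thesis
    unfolding state_norm_def by (simp add: L2_set_right_distrib)
qed

lemma state_norm_run_diff_le:
  assumes "D \<subseteq> S" "\<forall>g\<in>set gs. wf_gate n m g"
  shows "state_norm n m (run n m S U gs \<psi> - run n m D U gs \<phi>) \<le> state_norm n m (\<psi> - \<phi>)
     + 2 * (\<Sum>j<num_S gs. state_norm n m (query_part (S - D) (run n m D U (prefix_before j gs) \<phi>)))"
  using assms(2)
proof (induction gs arbitrary: \<psi> \<phi>)
  case Nil
  then show ?case by (simp add: num_S_def)
next
  case (Cons g gs)
  let ?P = "\<lambda>gs \<phi>. \<Sum>j<num_S gs. state_norm n m (query_part (S - D) (run n m D U (prefix_before j gs) \<phi>))"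
  have IH: "state_norm n m (run n m S U gs \<psi>' - run n m D U gs \<phi>')
      \<le> state_norm n m (\<psi>' - \<phi>') + 2 * ?P gs \<phi>'" for \<psi>' \<phi>'
    by (rule Cons.IH) (use Cons.prems in simp)
  show ?case
  proof (cases "g = QueryS")
    case True
    have "phase S \<psi> - phase D \<phi> = phase S (\<psi> - \<phi>) + (phase S \<phi> - phase D \<phi>)"
      by (simp add: apply_gate_diff[of n m S U QueryS, simplified])
    then have "state_norm n m (phase S \<psi> - phase D \<phi>)
        \<le> state_norm n m (phase S (\<psi> - \<phi>)) + state_norm n m (phase S \<phi> - phase D \<phi>)"
      by (metis state_norm_triangle)
    then have step: "state_norm n m (phase S \<psi> - phase D \<phi>)
        \<le> state_norm n m (\<psi> - \<phi>) + 2 * state_norm n m (query_part (S - D) \<phi>)"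
      by (simp only: state_norm_phase state_norm_phase_diff[OF assms(1)])
    have "num_S (g # gs) = Suc (num_S gs)"
      using True by (simp add: num_S_def)
    then have shift: "?P (g # gs) \<phi> = state_norm n m (query_part (S - D) \<phi>) + ?P gs (phase D \<phi>)"
      using True by (simp only: sum.lessThan_Suc_shift) simp
    have "state_norm n m (run n m S U (g # gs) \<psi> - run n m D U (g # gs) \<phi>)
        = state_norm n m (run n m S U gs (phase S \<psi>) - run n m D U gs (phase D \<phi>))"
      using True by simp
    also have "\<dots> \<le> state_norm n m (phase S \<psi> - phase D \<phi>) + 2 * ?P gs (phase D \<phi>)"
      by (rule IH)
    also have "\<dots> \<le> state_norm n m (\<psi> - \<phi>) + 2 * ?P (g # gs) \<phi>"
      using step shift by simp
    finally show ?thesis .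
  next
    case False
    then have same: "apply_gate n m D U g = apply_gate n m S U g"
      by (cases g) auto
    have gate: "state_norm n m (apply_gate n m S U g \<psi> - apply_gate n m D U g \<phi>) = state_norm n m (\<psi> - \<phi>)"
      using Cons.prems same by (simp flip: apply_gate_diff add: state_norm_apply_gate)
    have shift: "?P (g # gs) \<phi> = ?P gs (apply_gate n m D U g \<phi>)"
      using False by (simp add: num_S_def)
    have "state_norm n m (run n m S U (g # gs) \<psi> - run n m D U (g # gs) \<phi>)
        = state_norm n m (run n m S U gs (apply_gate n m S U g \<psi>) - run n m D U gs (apply_gate n m D U g \<phi>))"
      by simp
    also have "\<dots> \<le> state_norm n m (apply_gate n m S U g \<psi> - apply_gate n m D U g \<phi>)
        + 2 * ?P gs (apply_gate n m D U g \<phi>)"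
      by (rule IH)
    also have "\<dots> = state_norm n m (\<psi> - \<phi>) + 2 * ?P (g # gs) \<phi>"
      by (simp only: gate shift)
    finally show ?thesis .
  qed
qed

lemma acc_prob_diff_le:
  assumes "\<forall>g\<in>set gs. wf_gate n m g" "length w \<le> m"
  shows "acc_prob n m S U gs w - acc_prob n m D U gs w
    \<le> state_norm n m (run n m S U gs (init n m w) - run n m D U gs (init n m w))"
proof -
  have "acc_prob n m T U gs w = (\<Sum>i\<in>{i \<in> carrier n m. fst i}. (cmod (run n m T U gs (init n m w) i))\<^sup>2)"
    for T
    by (simp add: acc_prob_def sum.inter_filter finite_carrier)
  moreover have "L2_set (\<lambda>i. cmod (run n m T U gs (init n m w) i)) (carrier n m) = 1" for T
    using state_norm_run[OF assms(1)] state_norm_init[OF assms(2)] by (simp add: state_norm_def)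
  ultimately show ?thesis
    unfolding state_norm_def
    by (simp add: measurement_prob_diff_le_dist finite_carrier)
qed

lemma apply_phase_gate:
  assumes "i \<in> carrier n m"
  shows "apply_gate n m S U (phase_gate D) \<psi> i = phase D \<psi> i"
proof -
  have "apply_gate n m S U (phase_gate D) \<psi> i
      = (\<Sum>j\<in>carrier n m. if j = i then (if fst i \<and> fst (snd i) \<in> D then -1 else 1) * \<psi> j else 0)"
    using assms by (auto simp: phase_gate_def mat_apply_def intro!: sum.cong)
  also have "\<dots> = phase D \<psi> i"
    using assms finite_carrier by (cases i) (simp add: phase_def)
  finally show ?thesis .
qed

lemma run_replace_queryS:
  assumes "\<forall>i\<in>carrier n m. \<psi> i = \<phi> i"
  shows "\<forall>i\<in>carrier n m.
    run n m S U (map (\<lambda>g. if g = QueryS then phase_gate D else g) gs) \<psi> i = run n m D U gs \<phi> i"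
  using assms
proof (induction gs arbitrary: \<psi> \<phi>)
  case (Cons g gs)
  have "\<forall>i\<in>carrier n m.
      apply_gate n m S U (if g = QueryS then phase_gate D else g) \<psi> i = apply_gate n m D U g \<phi> i"
    using Cons.prems
    by (cases g) (auto simp: apply_phase_gate mat_apply_def phase_def intro!: sum.cong)
  then show ?case
    using Cons.IH by simp
qed simp

lemma run_sampler_gates:
  "i \<in> carrier n m \<Longrightarrow> run n m S U (sampler_gates D j gs) \<psi> i = run n m D U (prefix_before j gs) \<psi> i"
  using run_replace_queryS[of n m \<psi> \<psi> S U D "prefix_before j gs"] by (simp add: sampler_gates_def)

lemma sampler_gates_query_counts:
  "num_S (sampler_gates D j gs) = 0 \<and> num_U (sampler_gates D j gs) \<le> num_U gs"
proof -
  have "num_U (prefix_before j gs) \<le> num_U gs"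
    by (induction j gs rule: prefix_before.induct) (auto simp: num_U_def)
  moreover have "num_U (sampler_gates D j gs) = num_U (prefix_before j gs)"
    unfolding num_U_def sampler_gates_def filter_map o_def length_map
    by (intro arg_cong[where f = length] filter_cong) (auto simp: phase_gate_def)
  ultimately show ?thesis
    by (simp add: num_S_def sampler_gates_def filter_map o_def phase_gate_def)
qed

lemma sampler_prob_ge:
  "(1 / real t) * (\<Sum>j<t. (state_norm n m (query_part (S - D)
      (run n m D U (prefix_before j gs) (init n m w))))\<^sup>2)
    \<le> sampler_prob n m S U D gs t w (S - D)"
proof -
  have branch: "(state_norm n m (query_part (S - D) (run n m D U (prefix_before j gs) (init n m w))))\<^sup>2
    \<le> (\<Sum>i\<in>carrier n m. if sampler_out n D i \<in> S - D
           then (cmod (run n m S U (sampler_gates D j gs) (init n m w) i))\<^sup>2 else 0)" for j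
    unfolding state_norm_def power2_L2_set
  proof (rule sum_mono)
    fix i assume i: "i \<in> carrier n m"
    obtain b x z where i_eq: "i = (b, x, z)"
      by (cases i)
    show "(cmod (query_part (S - D) (run n m D U (prefix_before j gs) (init n m w)) i))\<^sup>2
      \<le> (if sampler_out n D i \<in> S - D
           then (cmod (run n m S U (sampler_gates D j gs) (init n m w) i))\<^sup>2 else 0)"
    proof (cases "b \<and> x \<in> S - D")
      case True
      then have "sampler_out n D i \<in> S - D"
        by (simp add: sampler_out_def i_eq)
      then show ?thesis
        using True run_sampler_gates[OF i] by (simp add: query_part_def i_eq)
    qed (auto simp: query_part_def i_eq)
  qed
  then show ?thesis
    unfolding sampler_prob_def sum_distrib_left[where A = "{..<t}"]
    by (intro sum_mono mult_left_mono branch) simp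
qed

theorem mainTheorem6:
  fixes n m q t :: nat and gs :: "gate list" and S U \<Delta> :: "bool list set" and w :: "bool list"
  assumes "q \<le> m"
    and "\<forall>g\<in>set gs. wf_gate n m g"
    and "num_S gs = t" and "num_U gs = t"
    and "decides_spec_forr n m q gs"
    and "S \<subseteq> strings n" and "U \<subseteq> strings n"
    and "spec_forr n S U \<ge> 59/100"
    and "\<Delta> \<subseteq> S" and "spec_forr n \<Delta> U \<le> 57/100"
    and "length w = q" and "acc_prob n m S U gs w \<ge> 2/3"
  shows "(\<forall>j<t. num_S (sampler_gates \<Delta> j gs) = 0 \<and> num_U (sampler_gates \<Delta> j gs) \<le> t)
         \<and> sampler_prob n m S U \<Delta> gs t w (S - \<Delta>) \<ge> 1 / (36 * (real t)\<^sup>2)"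
proof
  show "\<forall>j<t. num_S (sampler_gates \<Delta> j gs) = 0 \<and> num_U (sampler_gates \<Delta> j gs) \<le> t"
    using sampler_gates_query_counts assms(4) by metis
next
  define p where "p j = state_norm n m (query_part (S - \<Delta>) (run n m \<Delta> U (prefix_before j gs) (init n m w)))" for j
  have "acc_prob n m \<Delta> U gs w \<le> 1/3"
    using assms(5-7,9-11) unfolding decides_spec_forr_def by blast
  then have "1/3 \<le> state_norm n m (run n m S U gs (init n m w) - run n m \<Delta> U gs (init n m w))"
    using acc_prob_diff_le[OF assms(2), of w S U \<Delta>] assms(1,11,12) by linarith
  also have "\<dots> \<le> state_norm n m (init n m w - init n m w) + 2 * (\<Sum>j<t. p j)"
    using state_norm_run_diff_le[OF assms(9,2), where U = U and \<psi> = "init n m w" and \<phi> = "init n m w"]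
    by (simp only: p_def assms(3))
  also have "\<dots> = 2 * (\<Sum>j<t. p j)"
    by (simp add: state_norm_def L2_set_def)
  finally have sum_ge: "1/6 \<le> (\<Sum>j<t. p j)"
    by simp
  then have "0 < t"
    by (cases t) auto
  have "(1/6)\<^sup>2 \<le> (\<Sum>j<t. p j)\<^sup>2"
    using sum_ge by (intro power_mono) auto
  also have "\<dots> \<le> (\<Sum>j<t. (p j)\<^sup>2) * real t"
    using sum_squared_le_sum_of_squares[of p "{..<t}"] by simp
  finally have "1 / (36 * (real t)\<^sup>2) \<le> (1 / real t) * (\<Sum>j<t. (p j)\<^sup>2)"
    using \<open>0 < t\<close> by (simp add: field_simps power2_eq_square)
  then show "sampler_prob n m S U \<Delta> gs t w (S - \<Delta>) \<ge> 1 / (36 * (real t)\<^sup>2)"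
    using sampler_prob_ge[of t n m S \<Delta> U gs w] unfolding p_def by linarith
qed

end
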